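(* Let $m\in\mathbb N$. For any $\varepsilon>0$ there exists $\delta>0$ such that for any $n>m$, any $\zeta\in\mathrm{Mat}(m,\mathbb C)$ and any $z\in\mathrm{Mat}(\mathbb N,\mathbb C)$ satisfying $$\operatorname{tr}(\zeta^*\zeta)\,\operatorname{tr}\big((\pi^\infty_n(z))^*\pi^\infty_n(z)\big)<\delta n^2$$ we have $|1-(\mathcal A_n\Xi_\zeta)(z)|<\varepsilon$.
   Context: $\mathrm{Mat}(\mathbb N,\mathbb C)$ is the space of infinite complex matrices $z=(z_{ij})_{i,j\in\mathbb N}$, and $\pi^\infty_n(z)\in\mathrm{Mat}(n,\mathbb C)$ is its upper-left $n\times n$ corner. The unitary group $U(n)$ is embedded in $U(\infty)$ as acting on the first $n$ coordinates, so $u_1zu_2^{-1}$ makes sense for $u_1,u_2\in U(n)$, $z\in\mathrm{Mat}(\mathbb N,\mathbb C)$. For a function $f$ on $\mathrm{Mat}(\mathbb N,\mathbb C)$, $(\mathcal A_nf)(z)=\int_{U(n)\times U(n)}f(u_1zu_2^{-1})\,du_1\,du_2$, with $du$ the normalized Haar measure. For $\zeta\in\mathrm{Mat}(m,\mathbb C)$ set $\langle\zeta,z\rangle=\operatorname{Re}\operatorname{tr}(\zeta^*\pi^\infty_m(z))$ and $\Xi_\zeta(z)=\exp(i\langle\zeta,z\rangle)$. *)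

theory Defs
  imports "HOL-Analysis.Analysis" "HOL-Probability.Probability"
begin

text \<open>Infinite complex matrices indexed by nat (rows/columns 0,1,2,...).
  Finite n x n matrices are represented by the same type; only the entries
  with indices < n are relevant.\<close>
type_synonym cmat = "nat \<Rightarrow> nat \<Rightarrow> complex"

text \<open>Elements of U(n), embedded in U(infinity): identity outside the upper-left n x n block.\<close>
definition unitary_grp :: "nat \<Rightarrow> cmat set" where
  "unitary_grp n = {u. (\<forall>i j. (n \<le> i \<or> n \<le> j) \<longrightarrow> u i j = (if i = j then 1 else 0)) \<and>
      (\<forall>i<n. \<forall>j<n. (\<Sum>k<n. u i k * cnj (u j k)) = (if i = j then 1 else 0))}"

text \<open>Infinite matrix product (well defined when the left factor is in some embedded U(n)).\<close>
definition mat_mult_left :: "nat \<Rightarrow> cmat \<Rightarrow> cmat \<Rightarrow> cmat" where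
  "mat_mult_left n u z = (\<lambda>i j. if i < n then (\<Sum>k<n. u i k * z k j) else z i j)"

text \<open>Product z * v^{-1} = z * v^* for v in embedded U(n).\<close>
definition mat_mult_right_inv :: "nat \<Rightarrow> cmat \<Rightarrow> cmat \<Rightarrow> cmat" where
  "mat_mult_right_inv n z v = (\<lambda>i j. if j < n then (\<Sum>k<n. z i k * cnj (v j k)) else z i j)"

text \<open>Normalized Haar measure on U(n): a left invariant Borel probability measure on U(n)
  (unique by the Haar theorem for compact groups).\<close>
definition is_haar_U :: "nat \<Rightarrow> cmat measure \<Rightarrow> bool" where
  "is_haar_U n \<mu> \<longleftrightarrow> prob_space \<mu> \<and>
      space \<mu> = unitary_grp n \<and> sets \<mu> = sets (restrict_space borel (unitary_grp n)) \<and>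
      (\<forall>g\<in>unitary_grp n. distr \<mu> \<mu> (mat_mult_left n g) = \<mu>)"

definition avg_op :: "nat \<Rightarrow> cmat measure \<Rightarrow> (cmat \<Rightarrow> complex) \<Rightarrow> cmat \<Rightarrow> complex" where
  "avg_op n \<mu> f z = (\<integral>p. f (mat_mult_right_inv n (mat_mult_left n (fst p) z) (snd p)) \<partial>(\<mu> \<Otimes>\<^sub>M \<mu>))"

definition tr_adj :: "nat \<Rightarrow> cmat \<Rightarrow> cmat \<Rightarrow> complex" where
  "tr_adj n a b = (\<Sum>i<n. \<Sum>j<n. cnj (a i j) * b i j)"

definition Xi :: "nat \<Rightarrow> cmat \<Rightarrow> cmat \<Rightarrow> complex" where
  "Xi m \<zeta> z = exp (\<i> * complex_of_real (Re (tr_adj m \<zeta> z)))"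

end

theory Submission
  imports Defs "Jordan_Normal_Form.Determinant" "HOL-Combinatorics.Transposition"
begin

text \<open>Write \<open>w = u\<^sub>1 z u\<^sub>2\<^sup>*\<close>, so that \<open>(\<A>\<^sub>n \<Xi>\<^sub>\<zeta>)(z)\<close> is the mean of \<open>e\<^sup>i\<^sup>X\<close> with \<open>X = Re tr(\<zeta>\<^sup>* w)\<close>.
  Left invariance under permutation matrices makes all rows of a Haar unitary \<open>u\<close>
  identically distributed; as \<open>u\<close> is an isometry, the rows of \<open>u y\<close> have total squared
  length \<open>|y|\<^sup>2\<close>, so each row has mean squared length \<open>|y|\<^sup>2/n\<close>. Applied to \<open>u\<^sub>1\<close> and then to
  \<open>u\<^sub>2\<close> this gives \<open>E|w\<^sub>i\<^sub>j|\<^sup>2 = tr(z\<^sup>*z)/n\<^sup>2\<close>, hence by Cauchy-Schwarz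
  \<open>E X\<^sup>2 \<le> m\<^sup>2 tr(\<zeta>\<^sup>*\<zeta>) tr(z\<^sup>*z)/n\<^sup>2\<close>. Finally \<open>|1 - e\<^sup>i\<^sup>x| \<le> |x| \<le> (\<epsilon>\<^sup>2 + x\<^sup>2)/(2\<epsilon>)\<close>.\<close>

lemma unitary_grp_cols_orthonormal:
  assumes u: "u \<in> unitary_grp n" and k: "k < n" and k': "k' < n"
  shows "(\<Sum>i<n. cnj (u i k) * u i k') = (if k = k' then 1 else 0)"
proof -
  define A :: "complex mat" where "A = mat n n (\<lambda>(i,j). u i j)"
  define B :: "complex mat" where "B = mat n n (\<lambda>(i,j). cnj (u j i))"
  have A: "A \<in> carrier_mat n n" and B: "B \<in> carrier_mat n n" by (auto simp: A_def B_def)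
  have "A * B = 1\<^sub>m n"
  proof (rule eq_matI)
    fix i j assume ij: "i < dim_row (1\<^sub>m n)" "j < dim_col (1\<^sub>m n)"
    have "(A * B) $$ (i,j) = (\<Sum>k<n. u i k * cnj (u j k))"
      using ij by (simp add: A_def B_def scalar_prod_def lessThan_atLeast0 row_def col_def)
    also have "\<dots> = (if i = j then 1 else 0)" using u ij by (auto simp: unitary_grp_def)
    finally show "(A * B) $$ (i,j) = 1\<^sub>m n $$ (i,j)" using ij by simp
  qed (auto simp: A_def B_def)
  then have BA: "B * A = 1\<^sub>m n" by (rule mat_mult_left_right_inverse[OF A B])
  have "(B * A) $$ (k,k') = (\<Sum>i<n. cnj (u i k) * u i k')"
    using k k' by (simp add: A_def B_def scalar_prod_def lessThan_atLeast0 row_def col_def)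
  then show ?thesis using BA k k' by simp
qed

lemma unitary_grp_entry_norm_le_1:
  assumes u: "u \<in> unitary_grp n"
  shows "cmod (u i j) \<le> 1"
proof (cases "i < n \<and> j < n")
  case True
  have "(\<Sum>k<n. u i k * cnj (u i k)) = 1" using u True by (auto simp: unitary_grp_def)
  hence "(\<Sum>k<n. (cmod (u i k))^2) = 1"
    by (metis (mono_tags, lifting) complex_norm_square of_real_eq_1_iff of_real_sum sum.cong)
  moreover have "(cmod (u i j))^2 \<le> (\<Sum>k<n. (cmod (u i k))^2)"
    using True by (intro member_le_sum) auto
  ultimately show ?thesis using power2_le_imp_le[of "cmod (u i j)" 1] by simp
next
  case False
  then show ?thesis using u by (auto simp: unitary_grp_def)
qed

lemma unitary_grp_norm_row_mult_le:
  assumes u: "u \<in> unitary_grp n"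
  shows "cmod (\<Sum>k<n. u i k * y k) \<le> (\<Sum>k<n. cmod (y k))"
proof -
  have "cmod (\<Sum>k<n. u i k * y k) \<le> (\<Sum>k<n. cmod (u i k * y k))" by (rule norm_sum)
  also have "\<dots> \<le> (\<Sum>k<n. cmod (y k))"
    by (intro sum_mono) (simp add: norm_mult mult_left_le_one_le unitary_grp_entry_norm_le_1[OF u])
  finally show ?thesis .
qed

lemma unitary_grp_isometry:
  assumes u: "u \<in> unitary_grp n"
  shows "(\<Sum>i<n. (cmod (\<Sum>k<n. u i k * y k))^2) = (\<Sum>k<n. (cmod (y k))^2)"
proof -
  have "complex_of_real (\<Sum>i<n. (cmod (\<Sum>k<n. u i k * y k))^2)
      = (\<Sum>i<n. \<Sum>k'<n. \<Sum>k<n. y k * (cnj (y k') * (u i k * cnj (u i k'))))"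
    unfolding of_real_sum complex_norm_square
    by (simp add: sum_distrib_left sum_distrib_right algebra_simps)
  also have "\<dots> = (\<Sum>k'<n. \<Sum>k<n. \<Sum>i<n. y k * (cnj (y k') * (u i k * cnj (u i k'))))"
    by (subst sum.swap) (intro sum.cong refl sum.swap)
  also have "\<dots> = (\<Sum>k'<n. \<Sum>k<n. y k * cnj (y k') * (\<Sum>i<n. cnj (u i k') * u i k))"
    by (intro sum.cong refl) (simp add: sum_distrib_left mult_ac)
  also have "\<dots> = (\<Sum>k'<n. \<Sum>k<n. if k' = k then y k * cnj (y k) else 0)"
    by (intro sum.cong refl) (simp add: unitary_grp_cols_orthonormal[OF u])
  also have "\<dots> = complex_of_real (\<Sum>k<n. (cmod (y k))^2)"
    unfolding of_real_sum complex_norm_square by simp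
  finally show ?thesis by (simp only: of_real_eq_iff)
qed

lemma unitary_grp_norm_conj_entry_le:
  assumes u: "u \<in> unitary_grp n" and v: "v \<in> unitary_grp n"
  shows "cmod (\<Sum>l<n. (\<Sum>k<n. u i k * z k l) * cnj (v j l)) \<le> (\<Sum>l<n. \<Sum>k<n. cmod (z k l))"
proof -
  have "cmod (\<Sum>l<n. (\<Sum>k<n. u i k * z k l) * cnj (v j l))
      \<le> (\<Sum>l<n. cmod ((\<Sum>k<n. u i k * z k l) * cnj (v j l)))"
    by (rule norm_sum)
  also have "\<dots> \<le> (\<Sum>l<n. \<Sum>k<n. cmod (z k l))"
  proof (rule sum_mono)
    fix l
    have "cmod ((\<Sum>k<n. u i k * z k l) * cnj (v j l)) \<le> cmod (\<Sum>k<n. u i k * z k l)"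
      by (simp add: norm_mult mult_left_le unitary_grp_entry_norm_le_1[OF v])
    also have "\<dots> \<le> (\<Sum>k<n. cmod (z k l))" by (rule unitary_grp_norm_row_mult_le[OF u])
    finally show "cmod ((\<Sum>k<n. u i k * z k l) * cnj (v j l)) \<le> (\<Sum>k<n. cmod (z k l))" .
  qed
  finally show ?thesis .
qed

lemma mat_mult_right_inv_mat_mult_left_entry:
  assumes "i < n" "j < n"
  shows "mat_mult_right_inv n (mat_mult_left n u z) v i j
       = (\<Sum>l<n. (\<Sum>k<n. u i k * z k l) * cnj (v j l))"
  using assms by (simp add: mat_mult_right_inv_def mat_mult_left_def)

definition transposition_mat :: "nat \<Rightarrow> nat \<Rightarrow> cmat" where
  "transposition_mat a b = (\<lambda>i j. if Transposition.transpose a b i = j then 1 else 0)"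

lemma transpose_less: "a < (n::nat) \<Longrightarrow> b < n \<Longrightarrow> i < n \<Longrightarrow> Transposition.transpose a b i < n"
  by (simp add: Transposition.transpose_def)

lemma transpose_eq_self_if_ge: "a < (n::nat) \<Longrightarrow> b < n \<Longrightarrow> n \<le> i \<Longrightarrow> Transposition.transpose a b i = i"
  by (rule transpose_apply_other) auto

lemma transposition_mat_unitary:
  assumes ab: "a < n" "b < n"
  shows "transposition_mat a b \<in> unitary_grp n"
proof -
  have "transposition_mat a b i j = (if i = j then 1 else 0)" if "n \<le> i \<or> n \<le> j" for i j
    using that transpose_eq_self_if_ge[OF ab] transpose_less[OF ab] by (fastforce simp: transposition_mat_def)
  moreover have "(\<Sum>k<n. transposition_mat a b i k * cnj (transposition_mat a b j k))
      = (if i = j then 1 else 0)" if "i < n" for i j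
  proof -
    have "(\<Sum>k<n. transposition_mat a b i k * cnj (transposition_mat a b j k))
        = (\<Sum>k<n. if k = Transposition.transpose a b i then (if i = j then 1 else 0) else 0)"
      by (rule sum.cong) (auto simp: transposition_mat_def inj_eq[OF inj_transpose])
    then show ?thesis using transpose_less[OF ab that] by simp
  qed
  ultimately show ?thesis unfolding unitary_grp_def by blast
qed

lemma mat_mult_left_transposition_mat:
  assumes ab: "a < n" "b < n"
  shows "mat_mult_left n (transposition_mat a b) u = (\<lambda>i. u (Transposition.transpose a b i))"
proof (intro ext)
  fix i j
  show "mat_mult_left n (transposition_mat a b) u i j = u (Transposition.transpose a b i) j"
  proof (cases "i < n")
    case True
    have "(\<Sum>k<n. transposition_mat a b i k * u k j)
        = (\<Sum>k<n. if k = Transposition.transpose a b i then u (Transposition.transpose a b i) j else 0)"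
      by (rule sum.cong) (auto simp: transposition_mat_def)
    then show ?thesis using True transpose_less[OF ab True] by (simp add: mat_mult_left_def)
  next
    case False
    then show ?thesis using transpose_eq_self_if_ge[OF ab] by (simp add: mat_mult_left_def)
  qed
qed

lemma unitary_grp_transpose_rows:
  assumes ab: "a < n" "b < n" and u: "u \<in> unitary_grp n"
  shows "(\<lambda>i. u (Transposition.transpose a b i)) \<in> unitary_grp n"
proof -
  have "u (Transposition.transpose a b i) j = (if i = j then 1 else 0)" if "n \<le> i \<or> n \<le> j" for i j
  proof (cases "n \<le> i")
    case True
    then show ?thesis using u transpose_eq_self_if_ge[OF ab] by (simp add: unitary_grp_def)
  next
    case False
    then have "n \<le> j" "Transposition.transpose a b i < n" using that transpose_less[OF ab] by auto
    then show ?thesis using u False by (auto simp: unitary_grp_def)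
  qed
  moreover have "(\<Sum>k<n. u (Transposition.transpose a b i) k * cnj (u (Transposition.transpose a b j) k))
      = (if i = j then 1 else 0)" if "i < n" "j < n" for i j
    using u transpose_less[OF ab that(1)] transpose_less[OF ab that(2)]
    by (simp add: unitary_grp_def inj_eq[OF inj_transpose])
  ultimately show ?thesis unfolding unitary_grp_def by blast
qed

lemma norm_1_minus_iexp_le:
  assumes e: "e > 0"
  shows "cmod (1 - iexp x) \<le> (e^2 + x^2) / (2*e)"
proof -
  have "cmod (iexp x - (\<Sum>k \<le> 0. (\<i> * x)^k / fact k)) \<le> \<bar>x\<bar>^(Suc 0) / fact (Suc 0)"
    by (rule iexp_approx1)
  then have "cmod (1 - iexp x) \<le> \<bar>x\<bar>" by (simp add: norm_minus_commute)
  also have "\<bar>x\<bar> \<le> (e^2 + x^2) / (2*e)"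
    using sum_squares_ge_zero[of "\<bar>x\<bar> - e" 0] e
    by (simp add: pos_le_divide_eq power2_eq_square algebra_simps)
  finally show ?thesis .
qed

lemma Re_tr_adj_self: "Re (tr_adj k a a) = (\<Sum>i<k. \<Sum>j<k. (cmod (a i j))^2)"
proof -
  have "Re (cnj x * x) = (cmod x)^2" for x
    by (metis complex_norm_square mult.commute Re_complex_of_real)
  then show ?thesis unfolding tr_adj_def by (simp only: Re_sum)
qed

lemma Cauchy_Schwarz_ineq_double_sum:
  fixes a b :: "nat \<Rightarrow> nat \<Rightarrow> real"
  shows "(\<Sum>i<k. \<Sum>j<k. a i j * b i j)^2 \<le> (\<Sum>i<k. \<Sum>j<k. (a i j)^2) * (\<Sum>i<k. \<Sum>j<k. (b i j)^2)"
  using Cauchy_Schwarz_ineq_sum[of "case_prod a" "case_prod b" "{..<k} \<times> {..<k}"]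
  unfolding sum.cartesian_product by (simp add: case_prod_unfold)

lemma Re_tr_adj_Cauchy_Schwarz:
  "(Re (tr_adj k a b))^2 \<le> Re (tr_adj k a a) * Re (tr_adj k b b)"
proof -
  have "\<bar>Re (tr_adj k a b)\<bar> \<le> cmod (tr_adj k a b)" by (rule abs_Re_le_cmod)
  also have "\<dots> \<le> (\<Sum>i<k. cmod (\<Sum>j<k. cnj (a i j) * b i j))"
    unfolding tr_adj_def by (rule norm_sum)
  also have "\<dots> \<le> (\<Sum>i<k. \<Sum>j<k. cmod (a i j) * cmod (b i j))"
    by (rule sum_mono, rule order_trans[OF norm_sum]) (simp add: norm_mult)
  finally have "\<bar>Re (tr_adj k a b)\<bar>^2 \<le> (\<Sum>i<k. \<Sum>j<k. cmod (a i j) * cmod (b i j))^2"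
    by (rule power_mono) simp
  also have "\<dots> \<le> Re (tr_adj k a a) * Re (tr_adj k b b)"
    unfolding Re_tr_adj_self by (rule Cauchy_Schwarz_ineq_double_sum)
  finally show ?thesis by (simp only: power2_abs)
qed

lemma continuous_on_cmat_entry: "continuous_on UNIV (\<lambda>u::cmat. u i j)"
proof -
  have "continuous_on UNIV ((\<lambda>v::nat\<Rightarrow>complex. v j) \<circ> (\<lambda>u::cmat. u i))"
    by (rule continuous_on_compose) (auto intro: continuous_on_subset[OF continuous_on_product_coordinates])
  then show ?thesis by (simp add: o_def)
qed

lemma borel_measurable_cnj [measurable]: "(cnj :: complex \<Rightarrow> complex) \<in> borel_measurable borel"
  by (intro borel_measurable_continuous_onI continuous_on_cnj continuous_on_id)

context
  fixes n :: nat and \<mu> :: "cmat measure"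
  assumes haar: "is_haar_U n \<mu>"
begin

lemma haar_prob_space: "prob_space \<mu>"
  using haar by (simp add: is_haar_U_def)

lemma space_haar: "space \<mu> = unitary_grp n"
  using haar by (simp add: is_haar_U_def)

lemma sets_haar: "sets \<mu> = sets (restrict_space borel (unitary_grp n))"
  using haar by (simp add: is_haar_U_def)

lemma haar_entry_measurable [measurable]: "(\<lambda>u. u i j) \<in> borel_measurable \<mu>"
  by (subst measurable_cong_sets[OF sets_haar refl])
     (intro measurable_restrict_space1 borel_measurable_continuous_onI continuous_on_cmat_entry)

lemma haar_integral_transpose_rows:
  fixes f :: "cmat \<Rightarrow> real"
  assumes ab: "a < n" "b < n" and f: "f \<in> borel_measurable \<mu>"
  shows "(\<integral>u. f (\<lambda>i. u (Transposition.transpose a b i)) \<partial>\<mu>) = integral\<^sup>L \<mu> f"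
proof -
  let ?h = "mat_mult_left n (transposition_mat a b)"
  have h: "?h = (\<lambda>u i. u (Transposition.transpose a b i))"
    using mat_mult_left_transposition_mat[OF ab] by auto
  have "continuous_on UNIV (\<lambda>u::cmat. \<lambda>i j. u (Transposition.transpose a b i) j)"
    by (intro continuous_on_coordinatewise_then_product continuous_on_cmat_entry)
  then have "?h \<in> measurable \<mu> \<mu>"
    unfolding h measurable_cong_sets[OF sets_haar sets_haar]
    by (intro measurable_restrict_space2 measurable_restrict_space1 borel_measurable_continuous_onI)
       (auto simp: space_restrict_space unitary_grp_transpose_rows[OF ab])
  then have "integral\<^sup>L (distr \<mu> \<mu> ?h) f = (\<integral>u. f (?h u) \<partial>\<mu>)"
    using f by (rule integral_distr)
  moreover have "distr \<mu> \<mu> ?h = \<mu>"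
    using haar transposition_mat_unitary[OF ab] by (simp add: is_haar_U_def)
  ultimately show ?thesis by (simp add: h)
qed

lemma haar_integrable_row_norm_sq: "integrable \<mu> (\<lambda>u. (cmod (\<Sum>k<n. u i k * y k))^2)"
proof -
  interpret prob_space \<mu> by (rule haar_prob_space)
  show ?thesis
  proof (rule integrable_const_bound[where B="(\<Sum>k<n. cmod (y k))^2"])
    show "AE u in \<mu>. norm ((cmod (\<Sum>k<n. u i k * y k))^2) \<le> (\<Sum>k<n. cmod (y k))^2"
      by (rule AE_I2) (auto simp: space_haar intro!: power_mono unitary_grp_norm_row_mult_le)
  qed measurable
qed

lemma haar_row_second_moment:
  assumes i: "i < n"
  shows "(\<integral>u. (cmod (\<Sum>k<n. u i k * y k))^2 \<partial>\<mu>) = (\<Sum>k<n. (cmod (y k))^2) / n"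
proof -
  define q where "q i = (\<integral>u. (cmod (\<Sum>k<n. u i k * y k))^2 \<partial>\<mu>)" for i
  have q_eq: "q a = q 0" if a: "a < n" for a
    using haar_integral_transpose_rows[OF a, of 0 "\<lambda>v. (cmod (\<Sum>k<n. v 0 k * y k))^2"] a
    by (simp add: q_def)
  have "(\<Sum>a<n. q a) = (\<integral>u. (\<Sum>a<n. (cmod (\<Sum>k<n. u a k * y k))^2) \<partial>\<mu>)"
    unfolding q_def using haar_integrable_row_norm_sq by simp
  also have "\<dots> = (\<integral>u. (\<Sum>k<n. (cmod (y k))^2) \<partial>\<mu>)"
    by (intro Bochner_Integration.integral_cong refl) (simp add: space_haar unitary_grp_isometry)
  also have "\<dots> = (\<Sum>k<n. (cmod (y k))^2)"
    using prob_space.prob_space[OF haar_prob_space] by simp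
  finally have "(\<Sum>a<n. q a) = (\<Sum>k<n. (cmod (y k))^2)" .
  moreover have "(\<Sum>a<n. q a) = n * q 0"
    using sum.cong[OF refl q_eq, of "{..<n}"] by simp
  ultimately have "n * q 0 = (\<Sum>k<n. (cmod (y k))^2)" by simp
  then show ?thesis using i q_eq[OF i] by (simp add: q_def field_simps)
qed

lemma haar_pair_integrable_conj_entry_sq:
  "integrable (\<mu> \<Otimes>\<^sub>M \<mu>) (\<lambda>p. (cmod (\<Sum>l<n. (\<Sum>k<n. fst p i k * z k l) * cnj (snd p j l)))^2)"
proof -
  interpret prob_space "\<mu> \<Otimes>\<^sub>M \<mu>"
    by (intro prob_space_pair haar_prob_space)
  show ?thesis
  proof (rule integrable_const_bound[where B="(\<Sum>l<n. \<Sum>k<n. cmod (z k l))^2"])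
    show "AE p in \<mu> \<Otimes>\<^sub>M \<mu>. norm ((cmod (\<Sum>l<n. (\<Sum>k<n. fst p i k * z k l) * cnj (snd p j l)))^2)
        \<le> (\<Sum>l<n. \<Sum>k<n. cmod (z k l))^2"
      by (rule AE_I2)
         (auto simp: space_pair_measure space_haar intro!: power_mono unitary_grp_norm_conj_entry_le)
  qed measurable
qed

text \<open>By Fubini: \<open>(u\<^sub>1 z u\<^sub>2\<^sup>*)\<^sub>i\<^sub>j\<close> is the conjugate of the \<open>j\<close>-th entry of \<open>u\<^sub>2 r\<close> with
  \<open>r\<close> the conjugated \<open>i\<close>-th row of \<open>u\<^sub>1 z\<close>, so the row moment applies to \<open>u\<^sub>2\<close> and then to \<open>u\<^sub>1\<close>.\<close>
lemma haar_pair_conj_entry_second_moment: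
  assumes i: "i < n" and j: "j < n"
  shows "(\<integral>p. (cmod (\<Sum>l<n. (\<Sum>k<n. fst p i k * z k l) * cnj (snd p j l)))^2 \<partial>(\<mu> \<Otimes>\<^sub>M \<mu>))
     = Re (tr_adj n z z) / (real n)^2"
proof -
  interpret prob_space \<mu> by (rule haar_prob_space)
  interpret pair_sigma_finite \<mu> \<mu> ..
  define r where "r u l = (\<Sum>k<n. u i k * z k l)" for u l
  have inner: "(\<integral>v. (cmod (\<Sum>l<n. r u l * cnj (v j l)))^2 \<partial>\<mu>) = (\<Sum>l<n. (cmod (r u l))^2) / n" for u
  proof -
    have "cmod (\<Sum>l<n. r u l * cnj (v j l)) = cmod (\<Sum>l<n. v j l * cnj (r u l))" for v
      by (subst complex_mod_cnj[symmetric]) (simp add: mult.commute)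
    then show ?thesis using haar_row_second_moment[OF j, of "\<lambda>l. cnj (r u l)"] by simp
  qed
  have r_integrable: "integrable \<mu> (\<lambda>u. (cmod (r u l))^2)" for l
    unfolding r_def by (rule haar_integrable_row_norm_sq)
  have "(\<integral>p. (cmod (\<Sum>l<n. (\<Sum>k<n. fst p i k * z k l) * cnj (snd p j l)))^2 \<partial>(\<mu> \<Otimes>\<^sub>M \<mu>))
      = (\<integral>u. (\<integral>v. (cmod (\<Sum>l<n. r u l * cnj (v j l)))^2 \<partial>\<mu>) \<partial>\<mu>)"
    using integral_fst'[OF haar_pair_integrable_conj_entry_sq] by (simp add: r_def)
  also have "\<dots> = (\<Sum>l<n. (\<integral>u. (cmod (r u l))^2 \<partial>\<mu>)) / n"
    by (simp add: inner r_integrable)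
  also have "\<dots> = (\<Sum>l<n. (\<Sum>k<n. (cmod (z k l))^2) / n) / n"
    by (simp add: r_def haar_row_second_moment[OF i])
  also have "\<dots> = (\<Sum>l<n. \<Sum>k<n. (cmod (z k l))^2) / (real n)^2"
    by (simp add: sum_divide_distrib power2_eq_square)
  also have "\<dots> = Re (tr_adj n z z) / (real n)^2"
    unfolding Re_tr_adj_self by (subst sum.swap) (rule refl)
  finally show ?thesis .
qed

lemma norm_1_minus_avg_op_Xi_le:
  assumes mn: "m \<le> n" and e: "e > 0"
  shows "cmod (1 - avg_op n \<mu> (Xi m \<zeta>) z)
     \<le> (e^2 + Re (tr_adj m \<zeta> \<zeta>) * (real m ^ 2 * Re (tr_adj n z z) / real n ^ 2)) / (2*e)"
proof -
  interpret prob_space "\<mu> \<Otimes>\<^sub>M \<mu>"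
    by (intro prob_space_pair haar_prob_space)
  define w where "w p = (\<lambda>i j. \<Sum>l<n. (\<Sum>k<n. fst p i k * z k l) * cnj (snd p j l))"
    for p :: "cmat \<times> cmat"
  define X where "X p = Re (tr_adj m \<zeta> (w p))" for p
  define G where "G p = (e^2 + Re (tr_adj m \<zeta> \<zeta>) * Re (tr_adj m (w p) (w p))) / (2*e)" for p
  have "tr_adj m \<zeta> (mat_mult_right_inv n (mat_mult_left n (fst p) z) (snd p)) = tr_adj m \<zeta> (w p)" for p
    unfolding tr_adj_def w_def using mn
    by (intro sum.cong refl) (simp add: mat_mult_right_inv_mat_mult_left_entry)
  then have avg: "avg_op n \<mu> (Xi m \<zeta>) z = (\<integral>p. iexp (X p) \<partial>(\<mu> \<Otimes>\<^sub>M \<mu>))"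
    unfolding avg_op_def Xi_def X_def by simp
  have [measurable]: "X \<in> borel_measurable (\<mu> \<Otimes>\<^sub>M \<mu>)"
    unfolding X_def w_def tr_adj_def by measurable
  have iexp_integrable: "integrable (\<mu> \<Otimes>\<^sub>M \<mu>) (\<lambda>p. iexp (X p))"
    by (rule integrable_const_bound[where B=1]) simp_all
  have w_integrable: "integrable (\<mu> \<Otimes>\<^sub>M \<mu>) (\<lambda>p. Re (tr_adj m (w p) (w p)))"
    unfolding Re_tr_adj_self w_def
    by (intro Bochner_Integration.integrable_sum haar_pair_integrable_conj_entry_sq)
  have w_moment: "(\<integral>p. Re (tr_adj m (w p) (w p)) \<partial>(\<mu> \<Otimes>\<^sub>M \<mu>))
      = real m ^ 2 * Re (tr_adj n z z) / real n ^ 2"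
  proof -
    have "(\<integral>p. Re (tr_adj m (w p) (w p)) \<partial>(\<mu> \<Otimes>\<^sub>M \<mu>))
        = (\<Sum>i<m. \<Sum>j<m. Re (tr_adj n z z) / real n ^ 2)"
      unfolding Re_tr_adj_self[of m] w_def using mn
      by (simp add: haar_pair_integrable_conj_entry_sq haar_pair_conj_entry_second_moment)
    then show ?thesis by (simp add: power2_eq_square)
  qed
  have pointwise: "cmod (1 - iexp (X p)) \<le> G p" for p
  proof -
    have "(X p)^2 \<le> Re (tr_adj m \<zeta> \<zeta>) * Re (tr_adj m (w p) (w p))"
      unfolding X_def by (rule Re_tr_adj_Cauchy_Schwarz)
    then have "(e^2 + (X p)^2) / (2*e) \<le> G p"
      unfolding G_def using e by (intro divide_right_mono) auto
    then show ?thesis using norm_1_minus_iexp_le[OF e] order_trans by blast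
  qed
  have "cmod (1 - avg_op n \<mu> (Xi m \<zeta>) z) = cmod (\<integral>p. 1 - iexp (X p) \<partial>(\<mu> \<Otimes>\<^sub>M \<mu>))"
    using iexp_integrable by (simp add: avg prob_space)
  also have "\<dots> \<le> (\<integral>p. cmod (1 - iexp (X p)) \<partial>(\<mu> \<Otimes>\<^sub>M \<mu>))"
    by (rule integral_norm_bound)
  also have "\<dots> \<le> integral\<^sup>L (\<mu> \<Otimes>\<^sub>M \<mu>) G"
    using iexp_integrable w_integrable pointwise unfolding G_def
    by (intro integral_mono) auto
  also have "\<dots> = (e^2 + Re (tr_adj m \<zeta> \<zeta>) * (real m ^ 2 * Re (tr_adj n z z) / real n ^ 2)) / (2*e)"
    unfolding G_def using w_integrable by (simp add: w_moment prob_space)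
  finally show ?thesis .
qed

end

theorem mainTheorem10:
  fixes m :: nat and \<epsilon> :: real
  assumes "\<epsilon> > 0"
  shows "\<exists>\<delta>>0. \<forall>n>m. \<forall>\<zeta> z. \<forall>\<mu>. is_haar_U n \<mu> \<longrightarrow>
           Re (tr_adj m \<zeta> \<zeta>) * Re (tr_adj n z z) < \<delta> * real n ^ 2 \<longrightarrow>
           cmod (1 - avg_op n \<mu> (Xi m \<zeta>) z) < \<epsilon>"
proof (intro exI[of _ "\<epsilon>^2 / (real m ^ 2 + 1)"] conjI allI impI)
  show "\<epsilon>^2 / (real m ^ 2 + 1) > 0" using assms by (simp add: add_nonneg_pos)
next
  fix n \<zeta> z \<mu>
  assume mn: "m < n" and haar: "is_haar_U n \<mu>"
    and small: "Re (tr_adj m \<zeta> \<zeta>) * Re (tr_adj n z z) < \<epsilon>^2 / (real m ^ 2 + 1) * real n ^ 2"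
  have "Re (tr_adj m \<zeta> \<zeta>) * Re (tr_adj n z z) / real n ^ 2 < \<epsilon>^2 / (real m ^ 2 + 1)"
    using small mn by (simp add: pos_divide_less_eq)
  then have "real m ^ 2 * (Re (tr_adj m \<zeta> \<zeta>) * Re (tr_adj n z z) / real n ^ 2)
      \<le> real m ^ 2 * (\<epsilon>^2 / (real m ^ 2 + 1))"
    by (intro mult_left_mono) auto
  then have "Re (tr_adj m \<zeta> \<zeta>) * (real m ^ 2 * Re (tr_adj n z z) / real n ^ 2)
      \<le> real m ^ 2 * (\<epsilon>^2 / (real m ^ 2 + 1))"
    by (simp add: ac_simps)
  also have "\<dots> < \<epsilon>^2"
    using assms by (simp add: field_simps add_pos_nonneg)
  finally have "(\<epsilon>^2 + Re (tr_adj m \<zeta> \<zeta>) * (real m ^ 2 * Re (tr_adj n z z) / real n ^ 2)) / (2*\<epsilon>) < \<epsilon>"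
    using assms by (simp add: field_simps power2_eq_square)
  then show "cmod (1 - avg_op n \<mu> (Xi m \<zeta>) z) < \<epsilon>"
    using norm_1_minus_avg_op_Xi_le[OF haar less_imp_le[OF mn] assms, of \<zeta> z] by linarith
qed

end
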